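(* Let $T$ be a complete theory and $\varphi(x;y)$ a formula whose characteristic sequence $\langle P_n\rangle$ has an $(\omega,2)$-array. Then $\alpha(n)\geq\lfloor n/2\rfloor$ for all $n$.
   Context: The characteristic sequence: $P_n(y_1,\dots,y_n):=\exists x\bigwedge_{i\le n}\varphi(x;y_i)$, interpreted in a sufficiently saturated model of $T$; standing assumption $T\vdash\forall y\exists z\forall x(\varphi(x;z)\leftrightarrow\neg\varphi(x;y))$. An $(\omega,2)$-array is $\langle a^t_i:t<2,i<\omega\rangle\subseteq P_1$ such that for all $n<\omega$, $P_n(a^{t_1}_{i_1},\dots,a^{t_n}_{i_n})$ holds iff for all $j,\ell\le n$, $i_j=i_\ell$ implies $t_j=t_\ell$. For finite $X\subseteq P_1$, $\hat e(X)$ is the number of unordered pairs of distinct $x,y\in X$ with $\neg P_2(x,y)$, and $\alpha(n)=\max\{\hat e(X):X\subseteq P_1,|X|=n\}$. *)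

theory Defs
  imports Main
begin

text \<open>A formula phi(x;y) interpreted in a (sufficiently saturated) model: x ranges over
  type 'x, y over type 'y (tuples allowed via product types).\<close>

definition charP :: "('x \<Rightarrow> 'y \<Rightarrow> bool) \<Rightarrow> 'y list \<Rightarrow> bool" where
  "charP \<phi> ys \<longleftrightarrow> (\<exists>x. \<forall>y\<in>set ys. \<phi> x y)"

definition P1 :: "('x \<Rightarrow> 'y \<Rightarrow> bool) \<Rightarrow> 'y set" where
  "P1 \<phi> = {y. charP \<phi> [y]}"

definition P2 :: "('x \<Rightarrow> 'y \<Rightarrow> bool) \<Rightarrow> 'y \<Rightarrow> 'y \<Rightarrow> bool" where
  "P2 \<phi> y z \<longleftrightarrow> charP \<phi> [y, z]"

definition omega2_array :: "('x \<Rightarrow> 'y \<Rightarrow> bool) \<Rightarrow> (nat \<Rightarrow> nat \<Rightarrow> 'y) \<Rightarrow> bool" where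
  "omega2_array \<phi> a \<longleftrightarrow>
     (\<forall>t<2. \<forall>i. a t i \<in> P1 \<phi>) \<and>
     (\<forall>ps :: (nat \<times> nat) list. (\<forall>(t, i)\<in>set ps. t < 2) \<longrightarrow>
        (charP \<phi> (map (\<lambda>(t, i). a t i) ps) \<longleftrightarrow>
         (\<forall>(t, i)\<in>set ps. \<forall>(s, j)\<in>set ps. i = j \<longrightarrow> t = s)))"

definition e_hat :: "('x \<Rightarrow> 'y \<Rightarrow> bool) \<Rightarrow> 'y set \<Rightarrow> nat" where
  "e_hat \<phi> X = card {{x, y} | x y. x \<in> X \<and> y \<in> X \<and> x \<noteq> y \<and> \<not> P2 \<phi> x y}"

definition alpha :: "('x \<Rightarrow> 'y \<Rightarrow> bool) \<Rightarrow> nat \<Rightarrow> nat" where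
  "alpha \<phi> n = Max {e_hat \<phi> X | X. X \<subseteq> P1 \<phi> \<and> finite X \<and> card X = n}"

end

theory Submission
  imports Defs
begin

text \<open>Take the first \<open>\<lceil>n/2\<rceil>\<close> elements of the row \<open>a 0\<close> and the first \<open>\<lfloor>n/2\<rfloor>\<close> elements
  of the row \<open>a 1\<close>. The array conditions make all these parameters distinct and members of
  \<open>P\<^sub>1\<close>, while each column pair \<open>{a 0 i, a 1 i}\<close> is inconsistent, so this \<open>n\<close>-element set
  already contains \<open>\<lfloor>n/2\<rfloor>\<close> edges of \<open>\<not> P\<^sub>2\<close>.\<close>

lemma omega2_array_in_P1:
  assumes "omega2_array \<phi> a" and "t < 2"
  shows "a t i \<in> P1 \<phi>"
  using assms unfolding omega2_array_def by auto

lemma omega2_array_pair_iff: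
  assumes arr: "omega2_array \<phi> a" and "t < 2" "s < 2"
  shows "charP \<phi> [a t i, a s j] \<longleftrightarrow> (i = j \<longrightarrow> t = s)"
proof -
  have "\<forall>ps. (\<forall>(t, i)\<in>set ps. t < 2) \<longrightarrow> (charP \<phi> (map (\<lambda>(t, i). a t i) ps) \<longleftrightarrow>
      (\<forall>(t, i)\<in>set ps. \<forall>(s, j)\<in>set ps. i = j \<longrightarrow> t = s))"
    using arr unfolding omega2_array_def by blast
  from spec[OF this, of "[(t, i), (s, j)]"] show ?thesis
    using assms(2,3) by auto
qed

lemma omega2_array_inj_row:
  assumes arr: "omega2_array \<phi> a" and "t < 2"
  shows "inj (a t)"
proof (rule injI, rule ccontr)
  fix i j assume eq: "a t i = a t j" and "i \<noteq> j"
  have "1 - t < 2" "1 - t \<noteq> t" using \<open>t < 2\<close> by arith+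
  then have "charP \<phi> [a t i, a (1 - t) j]" "\<not> charP \<phi> [a t j, a (1 - t) j]"
    using omega2_array_pair_iff[OF arr \<open>t < 2\<close>] \<open>i \<noteq> j\<close> by auto
  with eq show False by simp
qed

lemma omega2_array_rows_disjoint:
  assumes arr: "omega2_array \<phi> a"
  shows "a 0 i \<noteq> a 1 j"
proof
  assume eq: "a 0 i = a 1 j"
  have inconsistent: "\<not> charP \<phi> [a 0 i, a 1 i]"
    using omega2_array_pair_iff[OF arr, of 0 1 i i] by simp
  show False
  proof (cases "i = j")
    case True
    have "charP \<phi> [a 0 i, a 0 i]"
      using omega2_array_in_P1[OF arr, of 0 i] unfolding P1_def charP_def by simp
    with inconsistent eq True show False by simp
  next
    case False
    then have "charP \<phi> [a 1 j, a 1 i]"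
      using omega2_array_pair_iff[OF arr, of 1 1 j i] by simp
    with inconsistent eq show False by simp
  qed
qed

lemma e_hat_le_alpha:
  assumes "X \<subseteq> P1 \<phi>" and "finite X"
  shows "e_hat \<phi> X \<le> alpha \<phi> (card X)"
proof -
  let ?S = "{e_hat \<phi> Y | Y. Y \<subseteq> P1 \<phi> \<and> finite Y \<and> card Y = card X}"
  have "e_hat \<phi> Y \<le> 2 ^ card Y" if "finite Y" for Y
  proof -
    have "{{x, y} | x y. x \<in> Y \<and> y \<in> Y \<and> x \<noteq> y \<and> \<not> P2 \<phi> x y} \<subseteq> Pow Y" by auto
    then have "e_hat \<phi> Y \<le> card (Pow Y)"
      unfolding e_hat_def using that by (intro card_mono) auto
    with that show ?thesis by (simp add: card_Pow)
  qed
  then have "?S \<subseteq> {..2 ^ card X}" by fastforce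
  then have "finite ?S" by (rule finite_subset) simp
  moreover have "e_hat \<phi> X \<in> ?S" using assms by blast
  ultimately show ?thesis unfolding alpha_def by (rule Max_ge)
qed

lemma card_le_e_hat:
  assumes "finite X" and "inj_on (\<lambda>i. {u i, v i}) I"
    and "\<And>i. i \<in> I \<Longrightarrow> u i \<in> X \<and> v i \<in> X \<and> u i \<noteq> v i \<and> \<not> P2 \<phi> (u i) (v i)"
  shows "card I \<le> e_hat \<phi> X"
proof -
  let ?E = "{{x, y} | x y. x \<in> X \<and> y \<in> X \<and> x \<noteq> y \<and> \<not> P2 \<phi> x y}"
  have "?E \<subseteq> Pow X" by auto
  with \<open>finite X\<close> have "finite ?E" by (meson finite_Pow_iff finite_subset)
  moreover have "(\<lambda>i. {u i, v i}) ` I \<subseteq> ?E"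
  proof
    fix e assume "e \<in> (\<lambda>i. {u i, v i}) ` I"
    then obtain i where "i \<in> I" "e = {u i, v i}" by blast
    with assms(3)[OF \<open>i \<in> I\<close>] show "e \<in> ?E" by blast
  qed
  ultimately have "card ((\<lambda>i. {u i, v i}) ` I) \<le> card ?E" by (rule card_mono)
  with assms(2) show ?thesis unfolding e_hat_def by (simp add: card_image)
qed

lemma omega2_array_half_matching:
  assumes arr: "omega2_array \<phi> a"
  obtains X where "X \<subseteq> P1 \<phi>" "finite X" "card X = n" "n div 2 \<le> e_hat \<phi> X"
proof
  define k where "k = n div 2"
  define X where "X = a 0 ` {..<n - k} \<union> a 1 ` {..<k}"
  have inj0: "inj (a 0)" and inj1: "inj (a 1)"
    using omega2_array_inj_row[OF arr] by auto
  note disj = omega2_array_rows_disjoint[OF arr]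
  show "X \<subseteq> P1 \<phi>" unfolding X_def using omega2_array_in_P1[OF arr] by auto
  show "finite X" unfolding X_def by simp
  have "card X = card (a 0 ` {..<n - k}) + card (a 1 ` {..<k})"
    unfolding X_def using disj by (intro card_Un_disjoint) auto
  also have "\<dots> = n"
    using inj0 inj1 by (simp add: card_image inj_on_subset k_def)
  finally show "card X = n" .
  have "inj_on (\<lambda>i. {a 0 i, a 1 i}) {..<k}"
  proof (rule inj_onI)
    fix i j assume "{a 0 i, a 1 i} = {a 0 j, a 1 j}"
    then have "a 0 i = a 0 j" using disj by (auto simp: doubleton_eq_iff)
    then show "i = j" using inj0 by (simp add: inj_eq)
  qed
  moreover have "a 0 i \<in> X \<and> a 1 i \<in> X \<and> a 0 i \<noteq> a 1 i \<and> \<not> P2 \<phi> (a 0 i) (a 1 i)"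
    if "i \<in> {..<k}" for i
    using that disj omega2_array_pair_iff[OF arr, of 0 1 i i]
    unfolding X_def P2_def k_def by auto
  ultimately have "card {..<k} \<le> e_hat \<phi> X"
    by (rule card_le_e_hat[OF \<open>finite X\<close>])
  then show "n div 2 \<le> e_hat \<phi> X" by (simp add: k_def)
qed

theorem mainTheorem10:
  fixes \<phi> :: "'x \<Rightarrow> 'y \<Rightarrow> bool" and a :: "nat \<Rightarrow> nat \<Rightarrow> 'y"
  assumes neg: "\<forall>y. \<exists>z. \<forall>x. \<phi> x z \<longleftrightarrow> \<not> \<phi> x y"
    and arr: "omega2_array \<phi> a"
  shows "\<forall>n. alpha \<phi> n \<ge> n div 2"
proof
  fix n
  obtain X where X: "X \<subseteq> P1 \<phi>" "finite X" and "card X = n" "n div 2 \<le> e_hat \<phi> X"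
    using omega2_array_half_matching[OF arr] .
  with e_hat_le_alpha[OF X] show "alpha \<phi> n \<ge> n div 2" by simp
qed

end
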